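(* For every real number $r\geq 0$ there exists a finite-dimensional radical square zero algebra $A$ of the form $\Bbbk Q/(\geq 2)$, $Q$ a finite quiver, such that $\operatorname{fpd}(A\text{-mod})$ is irrational and $\operatorname{fpd}(A\text{-mod})>r$.
   Context: $\Bbbk$ is an algebraically closed field; $(\geq 2)$ is the ideal of the path algebra generated by paths of length $\geq 2$; $A\text{-mod}$ is the category of finite-dimensional left $A$-modules. For a $\Bbbk$-linear abelian category $\mathcal C$: an object $M$ is a brick if $\mathrm{Hom}(M,M)=\Bbbk$; a finite set $\phi=\{X_1,\dots,X_k\}$ of nonzero objects is a brick set if each $X_i$ is a brick and $\dim\mathrm{Hom}(X_i,X_j)=\delta_{ij}$; its adjacency matrix is $A(\phi)=(\dim\mathrm{Ext}^1_{\mathcal C}(X_i,X_j))_{i,j}$; and $\operatorname{fpd}(\mathcal C)=\sup_{\phi}\rho(A(\phi))$, the supremum over all brick sets of the spectral radius $\rho$. *)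

theory Defs
  imports "Jordan_Normal_Form.Spectral_Radius" "HOL-Library.Function_Algebras"
    "HOL-Computational_Algebra.Polynomial" "HOL-Library.Extended_Real"
begin

text \<open>A finite quiver: number of vertices n (vertices 0..n-1) and a list of arrows,
  arrow number a going from fst (arrows ! a) to snd (arrows ! a).
  Multiple arrows and loops are allowed.\<close>
type_synonym quiver = "nat \<times> (nat \<times> nat) list"

definition nverts :: "quiver \<Rightarrow> nat" where "nverts Q = fst Q"
definition narrs :: "quiver \<Rightarrow> nat" where "narrs Q = length (snd Q)"
definition src :: "quiver \<Rightarrow> nat \<Rightarrow> nat" where "src Q a = fst (snd Q ! a)"
definition tgt :: "quiver \<Rightarrow> nat \<Rightarrow> nat" where "tgt Q a = snd (snd Q ! a)"

definition finite_quiver :: "quiver \<Rightarrow> bool" where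
  "finite_quiver Q \<longleftrightarrow> (\<forall>a<narrs Q. src Q a < nverts Q \<and> tgt Q a < nverts Q)"

definition alg_closed :: "'k::field itself \<Rightarrow> bool" where
  "alg_closed _ \<longleftrightarrow> (\<forall>p :: 'k poly. degree p > 0 \<longrightarrow> (\<exists>x. poly p x = 0))"

text \<open>Finite-dimensional modules over kQ/(paths of length >= 2) = representations of Q
  in which every composite of two consecutive arrows acts as zero.\<close>
record 'k rep =
  dimv :: "nat \<Rightarrow> nat"
  maps :: "nat \<Rightarrow> 'k mat"

definition is_rep :: "quiver \<Rightarrow> 'k::field rep \<Rightarrow> bool" where
  "is_rep Q M \<longleftrightarrow>
     (\<forall>v. nverts Q \<le> v \<longrightarrow> dimv M v = 0) \<and>
     (\<forall>a<narrs Q. maps M a \<in> carrier_mat (dimv M (tgt Q a)) (dimv M (src Q a))) \<and>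
     (\<forall>a<narrs Q. \<forall>b<narrs Q. tgt Q a = src Q b \<longrightarrow>
        maps M b * maps M a = 0\<^sub>m (dimv M (tgt Q b)) (dimv M (src Q a)))"

definition nonzero_rep :: "quiver \<Rightarrow> 'k::field rep \<Rightarrow> bool" where
  "nonzero_rep Q M \<longleftrightarrow> (\<exists>v<nverts Q. dimv M v > 0)"

definition tomat :: "nat \<Rightarrow> nat \<Rightarrow> (nat \<Rightarrow> nat \<Rightarrow> 'k) \<Rightarrow> 'k mat" where
  "tomat r c f = mat r c (\<lambda>(i, j). f i j)"

definition scale3 :: "'k::field \<Rightarrow> (nat \<Rightarrow> nat \<Rightarrow> nat \<Rightarrow> 'k) \<Rightarrow> (nat \<Rightarrow> nat \<Rightarrow> nat \<Rightarrow> 'k)" where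
  "scale3 c f = (\<lambda>v i j. c * f v i j)"

definition kdim :: "(nat \<Rightarrow> nat \<Rightarrow> nat \<Rightarrow> 'k::field) set \<Rightarrow> nat" where
  "kdim S = vector_space.dim scale3 S"

text \<open>Hom(X,Y): families of linear maps f_v : X_v \<rightarrow> Y_v (as matrices), commuting with arrows.\<close>
definition homs :: "quiver \<Rightarrow> 'k::field rep \<Rightarrow> 'k rep \<Rightarrow> (nat \<Rightarrow> nat \<Rightarrow> nat \<Rightarrow> 'k) set" where
  "homs Q X Y = {f.
     (\<forall>v i j. \<not> (v < nverts Q \<and> i < dimv Y v \<and> j < dimv X v) \<longrightarrow> f v i j = 0) \<and>
     (\<forall>a<narrs Q.
        maps Y a * tomat (dimv Y (src Q a)) (dimv X (src Q a)) (f (src Q a)) =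
        tomat (dimv Y (tgt Q a)) (dimv X (tgt Q a)) (f (tgt Q a)) * maps X a)}"

definition hom_dim :: "quiver \<Rightarrow> 'k::field rep \<Rightarrow> 'k rep \<Rightarrow> nat" where
  "hom_dim Q X Y = kdim (homs Q X Y)"

definition brick :: "quiver \<Rightarrow> 'k::field rep \<Rightarrow> bool" where
  "brick Q M \<longleftrightarrow> is_rep Q M \<and> nonzero_rep Q M \<and>
     homs Q M M = {(\<lambda>v i j. if v < nverts Q \<and> i < dimv M v \<and> i = j then c else 0) | c. True}"

text \<open>Ext^1(X,Y), classifying extensions 0 \<rightarrow> Y \<rightarrow> E \<rightarrow> X \<rightarrow> 0 with E_v = Y_v \<oplus> X_v and
  E_a = [[Y_a, d_a],[0, X_a]]: the space of families d_a : X_{s a} \<rightarrow> Y_{t a} such that E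
  satisfies the relations (cocycles), modulo those giving split extensions (coboundaries).\<close>
definition cocycles :: "quiver \<Rightarrow> 'k::field rep \<Rightarrow> 'k rep \<Rightarrow> (nat \<Rightarrow> nat \<Rightarrow> nat \<Rightarrow> 'k) set" where
  "cocycles Q X Y = {d.
     (\<forall>a i j. \<not> (a < narrs Q \<and> i < dimv Y (tgt Q a) \<and> j < dimv X (src Q a)) \<longrightarrow> d a i j = 0) \<and>
     (\<forall>a<narrs Q. \<forall>b<narrs Q. tgt Q a = src Q b \<longrightarrow>
        maps Y b * tomat (dimv Y (tgt Q a)) (dimv X (src Q a)) (d a) +
        tomat (dimv Y (tgt Q b)) (dimv X (src Q b)) (d b) * maps X a
        = 0\<^sub>m (dimv Y (tgt Q b)) (dimv X (src Q a)))}"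

definition coboundaries :: "quiver \<Rightarrow> 'k::field rep \<Rightarrow> 'k rep \<Rightarrow> (nat \<Rightarrow> nat \<Rightarrow> nat \<Rightarrow> 'k) set" where
  "coboundaries Q X Y = {d. \<exists>h.
     (\<forall>a i j. d a i j =
        (if a < narrs Q \<and> i < dimv Y (tgt Q a) \<and> j < dimv X (src Q a) then
          (maps Y a * tomat (dimv Y (src Q a)) (dimv X (src Q a)) (h (src Q a))
           - tomat (dimv Y (tgt Q a)) (dimv X (tgt Q a)) (h (tgt Q a)) * maps X a) $$ (i, j)
         else 0))}"

definition ext1_dim :: "quiver \<Rightarrow> 'k::field rep \<Rightarrow> 'k rep \<Rightarrow> nat" where
  "ext1_dim Q X Y = kdim (cocycles Q X Y) - kdim (coboundaries Q X Y)"

definition brick_set :: "quiver \<Rightarrow> 'k::field rep list \<Rightarrow> bool" where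
  "brick_set Q Xs \<longleftrightarrow> Xs \<noteq> [] \<and> (\<forall>X\<in>set Xs. brick Q X) \<and>
     (\<forall>i<length Xs. \<forall>j<length Xs. i \<noteq> j \<longrightarrow> hom_dim Q (Xs ! i) (Xs ! j) = 0)"

definition adj_mat :: "quiver \<Rightarrow> 'k::field rep list \<Rightarrow> complex mat" where
  "adj_mat Q Xs = mat (length Xs) (length Xs) (\<lambda>(i, j). of_nat (ext1_dim Q (Xs ! i) (Xs ! j)))"

definition fpd :: "'k::field itself \<Rightarrow> quiver \<Rightarrow> ereal" where
  "fpd _ Q = (SUP Xs \<in> {Xs :: 'k rep list. brick_set Q Xs}. ereal (spectral_radius (adj_mat Q Xs)))"

end

theory Submission
  imports Defs
begin

(* The quiver Q_m has two vertices, m loops at vertex 0 and one arrow in each direction between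
   0 and 1. A brick has only scalar endomorphisms; testing this against a loop acting alone,
   against rank-one maps composed with an arrow and against matrix units shows that the bricks of
   kQ_m/(>= 2) are the simples S_0, S_1 and the representations k -> k on which exactly one of the
   two connecting arrows acts nonzero. Two bricks without homomorphisms in either direction must
   be S_0 and S_1, so a brick set is either a single brick, with at most max m 1 self-extensions,
   or {S_0, S_1}, with adjacency matrix [[m, 1], [1, 0]]. Hence
   fpd(Q_m) = (m + sqrt (m^2 + 4)) / 2 >= m, which is irrational for m >= 1 because
   m^2 < m^2 + 4 < (m + 2)^2 and m^2 + 4 <> (m + 1)^2. *)

section \<open>Dimension of spaces of finitely supported families\<close>

global_interpretation V3: vector_space "scale3 :: 'k::field \<Rightarrow> (nat \<Rightarrow> nat \<Rightarrow> nat \<Rightarrow> 'k) \<Rightarrow> _"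
  by unfold_locales (auto simp: scale3_def fun_eq_iff algebra_simps)

definition delta3 :: "nat \<times> nat \<times> nat \<Rightarrow> nat \<Rightarrow> nat \<Rightarrow> nat \<Rightarrow> 'k::field" where
  "delta3 k v i j = (if (v, i, j) = k then 1 else 0)"

definition supported_on :: "(nat \<times> nat \<times> nat) set \<Rightarrow> (nat \<Rightarrow> nat \<Rightarrow> nat \<Rightarrow> 'k::field) set" where
  "supported_on K = {d. \<forall>v i j. (v, i, j) \<notin> K \<longrightarrow> d v i j = 0}"

lemma sum_apply3: "(\<Sum>x\<in>A. f x :: nat \<Rightarrow> nat \<Rightarrow> nat \<Rightarrow> 'k::field) v i j = (\<Sum>x\<in>A. f x v i j)"
  by (induction A rule: infinite_finite_induct) auto

lemma inj_delta3: "inj (delta3 :: _ \<Rightarrow> _ \<Rightarrow> _ \<Rightarrow> _ \<Rightarrow> 'k::field)"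
  by (auto simp: inj_def delta3_def fun_eq_iff split: if_splits)

lemma supported_on_subset_span:
  assumes "finite K"
  shows "supported_on K \<subseteq> V3.span (delta3 ` K :: (_ \<Rightarrow> _ \<Rightarrow> _ \<Rightarrow> 'k::field) set)"
proof
  fix d :: "nat \<Rightarrow> nat \<Rightarrow> nat \<Rightarrow> 'k"
  assume d: "d \<in> supported_on K"
  have "d = (\<Sum>k\<in>K. scale3 (d (fst k) (fst (snd k)) (snd (snd k))) (delta3 k))"
  proof (intro ext)
    fix v i j
    have "(\<Sum>k\<in>K. scale3 (d (fst k) (fst (snd k)) (snd (snd k))) (delta3 k)) v i j
        = (\<Sum>k\<in>K. if k = (v, i, j) then d v i j else 0)"
      unfolding sum_apply3 by (intro sum.cong) (auto simp: scale3_def delta3_def)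
    also have "\<dots> = d v i j"
      using assms d by (auto simp: sum.delta' supported_on_def)
    finally show "d v i j = (\<Sum>k\<in>K. scale3 (d (fst k) (fst (snd k)) (snd (snd k))) (delta3 k)) v i j"
      by simp
  qed
  also have "\<dots> \<in> V3.span (delta3 ` K)"
    by (intro V3.span_sum V3.span_scale V3.span_base) auto
  finally show "d \<in> V3.span (delta3 ` K)" .
qed

lemma independent_delta3:
  assumes "finite K"
  shows "V3.independent (delta3 ` K :: (_ \<Rightarrow> _ \<Rightarrow> _ \<Rightarrow> 'k::field) set)"
proof (rule V3.independent_if_scalars_zero)
  fix f :: "(nat \<Rightarrow> nat \<Rightarrow> nat \<Rightarrow> 'k) \<Rightarrow> 'k" and x :: "nat \<Rightarrow> nat \<Rightarrow> nat \<Rightarrow> 'k"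
  assume sum: "(\<Sum>y\<in>delta3 ` K. scale3 (f y) y) = 0" and "x \<in> delta3 ` K"
  then obtain v i j where k: "(v, i, j) \<in> K" and x: "x = delta3 (v, i, j)" by auto
  have "0 = (\<Sum>k\<in>K. scale3 (f (delta3 k)) (delta3 k)) v i j"
    using sum by (simp add: sum.reindex inj_on_subset[OF inj_delta3])
  also have "\<dots> = (\<Sum>k\<in>K. if k = (v, i, j) then f x else 0)"
    unfolding sum_apply3 x by (intro sum.cong) (auto simp: scale3_def delta3_def)
  also have "\<dots> = f x"
    using assms k by (simp add: sum.delta')
  finally show "f x = 0" by simp
qed (use assms in simp)

lemma kdim_le_card:
  fixes S :: "(nat \<Rightarrow> nat \<Rightarrow> nat \<Rightarrow> 'k::field) set"
  assumes "finite K" "S \<subseteq> supported_on K"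
  shows "kdim S \<le> card K"
proof -
  have "kdim S \<le> card (delta3 ` K :: (_ \<Rightarrow> _ \<Rightarrow> _ \<Rightarrow> 'k) set)"
    unfolding kdim_def using assms supported_on_subset_span by (intro V3.dim_le_card) auto
  also have "\<dots> \<le> card K"
    by (rule card_image_le[OF assms(1)])
  finally show ?thesis .
qed

lemma kdim_supported_on:
  assumes "finite K"
  shows "kdim (supported_on K :: (_ \<Rightarrow> _ \<Rightarrow> _ \<Rightarrow> 'k::field) set) = card K"
  unfolding kdim_def
proof (rule V3.dim_unique)
  show "delta3 ` K \<subseteq> (supported_on K :: (_ \<Rightarrow> _ \<Rightarrow> _ \<Rightarrow> 'k) set)"
    by (auto simp: supported_on_def delta3_def)
  show "card (delta3 ` K :: (_ \<Rightarrow> _ \<Rightarrow> _ \<Rightarrow> 'k) set) = card K"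
    by (rule card_image[OF inj_on_subset[OF inj_delta3 subset_UNIV]])
qed (use assms supported_on_subset_span independent_delta3 in auto)

lemma kdim_ne_0:
  fixes S :: "(nat \<Rightarrow> nat \<Rightarrow> nat \<Rightarrow> 'k::field) set"
  assumes "finite K" "S \<subseteq> supported_on K" "x \<in> S" "x \<noteq> 0"
  shows "kdim S \<noteq> 0"
proof
  obtain B where B: "B \<subseteq> S" "V3.independent B" "S \<subseteq> V3.span B" "card B = kdim S"
    unfolding kdim_def by (rule V3.basis_exists)
  have "finite B"
    using V3.independent_span_bound[OF _ B(2)] B(1) assms(1,2) supported_on_subset_span by blast
  moreover assume "kdim S = 0"
  ultimately have "S \<subseteq> V3.span {}"
    using B by simp
  then show False
    using assms(3,4) by (auto simp: V3.span_empty)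
qed

section \<open>Homomorphisms, extensions and simple representations\<close>

lemma tomat_carrier [simp]: "tomat r c f \<in> carrier_mat r c"
  by (simp add: tomat_def)

lemma tomat_dim [simp]: "dim_row (tomat r c f) = r" "dim_col (tomat r c f) = c"
  by (simp_all add: tomat_def)

lemma tomat_index [simp]: "i < r \<Longrightarrow> j < c \<Longrightarrow> tomat r c f $$ (i, j) = f i j"
  by (simp add: tomat_def)

lemma brick_is_rep: "brick Q X \<Longrightarrow> is_rep Q X"
  by (simp add: brick_def)

lemma brick_endo_scalar:
  assumes "brick Q X" "f \<in> homs Q X X"
  obtains c where
    "\<And>v. v < nverts Q \<Longrightarrow> tomat (dimv X v) (dimv X v) (f v) = c \<cdot>\<^sub>m 1\<^sub>m (dimv X v)"
proof -
  obtain c where "f = (\<lambda>v i j. if v < nverts Q \<and> i < dimv X v \<and> i = j then c else 0)"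
    using assms unfolding brick_def by auto
  then show thesis
    by (intro that[of c] eq_matI) auto
qed

lemma homs_subset_supported_on:
  "homs Q X Y \<subseteq> supported_on (SIGMA v:{..<nverts Q}. {..<dimv Y v} \<times> {..<dimv X v})"
  by (auto simp: homs_def supported_on_def)

lemma hom_dim_ne_0:
  assumes "f \<in> homs Q X Y" "f \<noteq> 0"
  shows "hom_dim Q X Y \<noteq> 0"
  unfolding hom_dim_def by (rule kdim_ne_0[OF _ homs_subset_supported_on assms]) auto

definition zero_maps :: "quiver \<Rightarrow> 'k::field rep \<Rightarrow> bool" where
  "zero_maps Q X \<longleftrightarrow> (\<forall>a<narrs Q. maps X a = 0\<^sub>m (dimv X (tgt Q a)) (dimv X (src Q a)))"

lemma homs_zero_maps:
  assumes "zero_maps Q X" "zero_maps Q Y"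
  shows "homs Q X Y = supported_on (SIGMA v:{..<nverts Q}. {..<dimv Y v} \<times> {..<dimv X v})"
  using assms by (auto simp: homs_def zero_maps_def supported_on_def)

lemma cocycles_zero_maps:
  assumes "zero_maps Q X" "zero_maps Q Y"
  shows "cocycles Q X Y =
    supported_on (SIGMA a:{..<narrs Q}. {..<dimv Y (tgt Q a)} \<times> {..<dimv X (src Q a)})"
proof -
  have "maps Y b * tomat (dimv Y (tgt Q a)) (dimv X (src Q a)) (d a) +
        tomat (dimv Y (tgt Q b)) (dimv X (src Q b)) (d b) * maps X a
        = 0\<^sub>m (dimv Y (tgt Q b)) (dimv X (src Q a))"
    if "a < narrs Q" "b < narrs Q" "tgt Q a = src Q b" for a b and d :: "nat \<Rightarrow> nat \<Rightarrow> nat \<Rightarrow> 'a"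
    using assms that unfolding zero_maps_def
    by (simp add: left_mult_zero_mat[OF tomat_carrier] right_mult_zero_mat[OF tomat_carrier])
  then have "cocycles Q X Y = {d. \<forall>a i j.
      \<not> (a < narrs Q \<and> i < dimv Y (tgt Q a) \<and> j < dimv X (src Q a)) \<longrightarrow> d a i j = 0}"
    unfolding cocycles_def by blast
  then show ?thesis
    by (simp add: supported_on_def)
qed

lemma coboundaries_zero_maps:
  assumes "zero_maps Q X" "zero_maps Q Y"
  shows "coboundaries Q X Y \<subseteq> {0}"
proof
  fix d assume "d \<in> coboundaries Q X Y"
  then obtain h where d: "\<And>a i j. d a i j =
        (if a < narrs Q \<and> i < dimv Y (tgt Q a) \<and> j < dimv X (src Q a) then
          (maps Y a * tomat (dimv Y (src Q a)) (dimv X (src Q a)) (h (src Q a))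
           - tomat (dimv Y (tgt Q a)) (dimv X (tgt Q a)) (h (tgt Q a)) * maps X a) $$ (i, j)
         else 0)"
    unfolding coboundaries_def by blast
  have "d a i j = 0" for a i j
    using assms unfolding d zero_maps_def
    by (simp add: left_mult_zero_mat[OF tomat_carrier] right_mult_zero_mat[OF tomat_carrier])
  then show "d \<in> {0}"
    by (simp add: fun_eq_iff)
qed

lemma ext1_dim_zero_maps:
  assumes "zero_maps Q X" "zero_maps Q Y"
  shows "ext1_dim Q X Y = (\<Sum>a<narrs Q. dimv Y (tgt Q a) * dimv X (src Q a))"
proof -
  have "kdim (cocycles Q X Y) = card (SIGMA a:{..<narrs Q}. {..<dimv Y (tgt Q a)} \<times> {..<dimv X (src Q a)})"
    unfolding cocycles_zero_maps[OF assms] by (rule kdim_supported_on) auto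
  also have "\<dots> = (\<Sum>a<narrs Q. dimv Y (tgt Q a) * dimv X (src Q a))"
    by (simp add: card_cartesian_product)
  finally have "kdim (cocycles Q X Y) = (\<Sum>a<narrs Q. dimv Y (tgt Q a) * dimv X (src Q a))" .
  moreover have "coboundaries Q X Y \<subseteq> supported_on {}"
    using coboundaries_zero_maps[OF assms] by (auto simp: supported_on_def)
  then have "kdim (coboundaries Q X Y) = 0"
    using kdim_le_card[of "{}"] by simp
  ultimately show ?thesis
    by (simp add: ext1_dim_def)
qed

definition simple_rep :: "quiver \<Rightarrow> nat \<Rightarrow> 'k::field rep" where
  "simple_rep Q v = \<lparr>dimv = (\<lambda>w. if w = v then 1 else 0),
     maps = (\<lambda>a. 0\<^sub>m (if tgt Q a = v then 1 else 0) (if src Q a = v then 1 else 0))\<rparr>"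

lemma dimv_simple_rep [simp]: "dimv (simple_rep Q v) w = (if w = v then 1 else 0)"
  by (simp add: simple_rep_def)

lemma zero_maps_simple_rep: "zero_maps Q (simple_rep Q v)"
  by (simp add: zero_maps_def simple_rep_def)

lemma is_rep_simple_rep: "v < nverts Q \<Longrightarrow> is_rep Q (simple_rep Q v)"
  by (auto simp: is_rep_def simple_rep_def)

lemma brick_simple_rep:
  assumes "v < nverts Q"
  shows "brick Q (simple_rep Q v :: 'k::field rep)"
proof -
  let ?S = "simple_rep Q v :: 'k rep"
  let ?scalars = "{(\<lambda>w i j. if w < nverts Q \<and> i < dimv ?S w \<and> i = j then c else 0) | c. True}"
  have homs: "homs Q ?S ?S = supported_on (SIGMA w:{..<nverts Q}. {..<dimv ?S w} \<times> {..<dimv ?S w})"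
    by (rule homs_zero_maps[OF zero_maps_simple_rep zero_maps_simple_rep])
  have "homs Q ?S ?S = ?scalars"
  proof (intro Set.set_eqI iffI)
    fix f
    assume "f \<in> homs Q ?S ?S"
    then have "f = (\<lambda>w i j. if w < nverts Q \<and> i < dimv ?S w \<and> i = j then f v 0 0 else 0)"
      using assms unfolding homs by (auto simp: supported_on_def fun_eq_iff)
    then show "f \<in> ?scalars"
      by blast
  next
    fix f :: "nat \<Rightarrow> nat \<Rightarrow> nat \<Rightarrow> 'k"
    assume "f \<in> ?scalars"
    then show "f \<in> homs Q ?S ?S"
      unfolding homs by (auto simp: supported_on_def)
  qed
  moreover have "nonzero_rep Q ?S"
    using assms by (auto simp: nonzero_rep_def)
  ultimately show ?thesis
    using assms by (simp add: brick_def is_rep_simple_rep)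
qed

lemma hom_dim_simple_rep_distinct:
  assumes "v \<noteq> w"
  shows "hom_dim Q (simple_rep Q v) (simple_rep Q w) = 0"
proof -
  have "(SIGMA u:{..<nverts Q}. {..<dimv (simple_rep Q w) u} \<times> {..<dimv (simple_rep Q v) u}) = {}"
    using assms by (auto split: if_splits)
  then show ?thesis
    unfolding hom_dim_def homs_zero_maps[OF zero_maps_simple_rep zero_maps_simple_rep]
    by (simp add: kdim_supported_on)
qed

definition elem_mat :: "nat \<Rightarrow> nat \<Rightarrow> nat \<Rightarrow> nat \<Rightarrow> 'a::{zero,one} mat" where
  "elem_mat r c p q = mat r c (\<lambda>(i, j). if i = p \<and> j = q then 1 else 0)"

lemma elem_mat_carrier [simp]: "elem_mat r c p q \<in> carrier_mat r c"
  by (simp add: elem_mat_def)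

lemma index_elem_mat [simp]:
  "i < r \<Longrightarrow> j < c \<Longrightarrow> elem_mat r c p q $$ (i, j) = (if i = p \<and> j = q then 1 else 0)"
  by (simp add: elem_mat_def)

lemma elem_mat_mult_index:
  assumes "M \<in> carrier_mat n c" "q < n" "i < r" "j < c"
  shows "(elem_mat r n p q * M) $$ (i, j) = (if i = p then M $$ (q, j) else (0::'a::field))"
  using assms by (auto simp: elem_mat_def scalar_prod_def if_distrib[of "\<lambda>x. x * _"] sum.delta cong: if_cong)

lemma mult_elem_mat_index:
  assumes "M \<in> carrier_mat r n" "p < n" "i < r" "j < c"
  shows "(M * elem_mat n c p q) $$ (i, j) = (if j = q then M $$ (i, p) else (0::'a::field))"
  using assms by (auto simp: elem_mat_def scalar_prod_def if_distrib[of "\<lambda>x. _ * x"] sum.delta cong: if_cong)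

lemma scalar_mat_single_diag_entry:
  fixes A :: "'a::field mat"
  assumes "A = c \<cdot>\<^sub>m 1\<^sub>m n" "j < n" "A $$ (j, j) \<noteq> 0" "\<And>a. a < n \<Longrightarrow> a \<noteq> j \<Longrightarrow> A $$ (a, a) = 0"
  shows "n = 1"
proof (rule ccontr)
  assume "n \<noteq> 1"
  define a :: nat where "a = (if j = 0 then 1 else 0)"
  have "a < n" "a \<noteq> j"
    using assms(2) \<open>n \<noteq> 1\<close> by (auto simp: a_def)
  then show False
    using assms by simp
qed

lemma rank_one_scalar_products:
  fixes M :: "'a::field mat"
  assumes M: "M \<in> carrier_mat p q" and ij: "i < p" "j < q" "M $$ (i, j) \<noteq> 0"
    and "elem_mat q p j i * M = c \<cdot>\<^sub>m 1\<^sub>m q" "M * elem_mat q p j i = c \<cdot>\<^sub>m 1\<^sub>m p"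
  shows "p = 1" "q = 1"
proof -
  show "q = 1"
    by (rule scalar_mat_single_diag_entry[OF assms(5) ij(2)]) (use M ij in \<open>simp_all add: elem_mat_mult_index\<close>)
  show "p = 1"
    by (rule scalar_mat_single_diag_entry[OF assms(6) ij(1)]) (use M ij in \<open>simp_all add: mult_elem_mat_index\<close>)
qed

section \<open>Spectral radii and metallic means\<close>

lemma spectrum_mat_1_1: "spectrum (mat 1 1 (\<lambda>_. c) :: complex mat) = {c}"
proof (intro Set.set_eqI iffI)
  fix k
  assume "k \<in> spectrum (mat 1 1 (\<lambda>_. c) :: complex mat)"
  then obtain v where v: "v \<in> carrier_vec 1" "v \<noteq> 0\<^sub>v 1" "mat 1 1 (\<lambda>_. c) *\<^sub>v v = k \<cdot>\<^sub>v v"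
    unfolding spectrum_def eigenvalue_def eigenvector_def by auto
  have "v $ 0 \<noteq> 0"
    using v(1,2) by (metis eq_vecI carrier_vecD index_zero_vec less_one)
  moreover have "c * v $ 0 = k * v $ 0"
    using arg_cong[OF v(3), of "\<lambda>w. w $ 0"] v(1) by (simp add: scalar_prod_def)
  ultimately show "k \<in> {c}"
    by simp
next
  fix k
  assume "k \<in> {c}"
  then have "eigenvector (mat 1 1 (\<lambda>_. c)) (vec 1 (\<lambda>_. 1)) k"
    unfolding eigenvector_def by (auto intro!: eq_vecI simp: scalar_prod_def dest: arg_cong[of _ _ "\<lambda>w. w $ 0"])
  then show "k \<in> spectrum (mat 1 1 (\<lambda>_. c))"
    unfolding spectrum_def eigenvalue_def by auto
qed

lemma spectral_radius_mat_1_1: "spectral_radius (mat 1 1 (\<lambda>_. c) :: complex mat) = cmod c"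
  unfolding spectral_radius_def spectrum_mat_1_1 by simp

definition mat2 :: "complex \<Rightarrow> complex \<Rightarrow> complex mat" where
  "mat2 p q = mat 2 2 (\<lambda>(i, j). if i = 0 \<and> j = 0 then p else if i = 1 \<and> j = 1 then q else 1)"

lemma spectrum_mat2: "k \<in> spectrum (mat2 p q) \<longleftrightarrow> (k - p) * (k - q) = 1"
proof
  assume "k \<in> spectrum (mat2 p q)"
  then obtain v where v: "v \<in> carrier_vec 2" "v \<noteq> 0\<^sub>v 2" "mat2 p q *\<^sub>v v = k \<cdot>\<^sub>v v"
    unfolding spectrum_def eigenvalue_def eigenvector_def by (auto simp: mat2_def)
  have "p * v $ 0 + v $ 1 = k * v $ 0" "v $ 0 + q * v $ 1 = k * v $ 1"
    using arg_cong[OF v(3), of "\<lambda>w. w $ 0"] arg_cong[OF v(3), of "\<lambda>w. w $ 1"] v(1)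
    by (simp_all add: mat2_def scalar_prod_def numeral_2_eq_2)
  then have v1: "v $ 1 = (k - p) * v $ 0" and "v $ 0 = (k - q) * v $ 1"
    by (simp_all add: algebra_simps)
  then have v0: "v $ 0 = (k - q) * ((k - p) * v $ 0)"
    by simp
  have "v $ 0 \<noteq> 0"
  proof
    assume "v $ 0 = 0"
    then have "v = 0\<^sub>v 2"
      using v(1) v1 by (intro eq_vecI) (auto simp: less_2_cases_iff)
    with v(2) show False
      by simp
  qed
  moreover have "v $ 0 * (1 - (k - p) * (k - q)) = v $ 0 - (k - q) * ((k - p) * v $ 0)"
    by (simp add: algebra_simps)
  then have "v $ 0 * (1 - (k - p) * (k - q)) = 0"
    using v0 by simp
  ultimately show "(k - p) * (k - q) = 1"
    by simp
next
  assume k: "(k - p) * (k - q) = 1"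
  define v :: "complex vec" where "v = vec 2 (\<lambda>i. if i = 0 then 1 else k - p)"
  have "mat2 p q *\<^sub>v v = k \<cdot>\<^sub>v v"
  proof (rule eq_vecI)
    fix i
    assume "i < dim_vec (k \<cdot>\<^sub>v v)"
    then have "i = 0 \<or> i = 1"
      by (auto simp: v_def)
    then show "(mat2 p q *\<^sub>v v) $ i = (k \<cdot>\<^sub>v v) $ i"
      using k by (auto simp: mat2_def v_def scalar_prod_def numeral_2_eq_2 algebra_simps)
  qed (simp add: mat2_def v_def)
  then have "eigenvector (mat2 p q) v k"
    unfolding eigenvector_def by (auto simp: mat2_def v_def dest: arg_cong[of _ _ "\<lambda>w. w $ 0"])
  then show "k \<in> spectrum (mat2 p q)"
    unfolding spectrum_def eigenvalue_def by auto
qed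

(* The positive root of x^2 = m x + 1 (the golden ratio for m = 1). *)
definition metallic_mean :: "nat \<Rightarrow> real" where
  "metallic_mean m = (m + sqrt (m\<^sup>2 + 4)) / 2"

lemma metallic_mean_ge: "real m \<le> metallic_mean m" "1 \<le> metallic_mean m"
proof -
  have "real m \<le> sqrt (m\<^sup>2 + 4)" "2 \<le> sqrt (m\<^sup>2 + 4)"
    by (simp_all add: real_le_rsqrt)
  then show "real m \<le> metallic_mean m" "1 \<le> metallic_mean m"
    by (simp_all add: metallic_mean_def)
qed

lemma metallic_mean_conjugate: "metallic_mean m * (metallic_mean m - m) = 1"
proof -
  have "sqrt (m\<^sup>2 + 4) ^ 2 = m\<^sup>2 + 4"
    by simp
  then show ?thesis
    by (simp add: metallic_mean_def field_simps power2_eq_square)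
qed

lemma spectrum_mat2_metallic:
  assumes "p * q = 0" "p + q = of_nat m"
  shows "spectrum (mat2 p q) = {of_real (metallic_mean m), of_real (real m - metallic_mean m)}"
proof (intro Set.set_eqI)
  fix k :: complex
  let ?\<mu> = "of_real (metallic_mean m) :: complex"
  have conj: "?\<mu> * ?\<mu> = 1 + of_nat m * ?\<mu>"
    using arg_cong[OF metallic_mean_conjugate[of m], of complex_of_real] by (simp add: algebra_simps)
  have "(k - p) * (k - q) = k * k - (p + q) * k + p * q"
    by (simp add: algebra_simps)
  also have "\<dots> = (k - ?\<mu>) * (k - (of_nat m - ?\<mu>)) + 1"
    using assms conj by (simp add: algebra_simps)
  finally show "k \<in> spectrum (mat2 p q) \<longleftrightarrow> k \<in> {?\<mu>, of_real (real m - metallic_mean m)}"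
    unfolding spectrum_mat2 by auto
qed

lemma spectral_radius_mat2_metallic:
  assumes "p * q = 0" "p + q = of_nat m"
  shows "spectral_radius (mat2 p q) = metallic_mean m"
proof -
  have "cmod (of_real (real m - metallic_mean m)) \<le> metallic_mean m"
    unfolding norm_of_real using metallic_mean_ge[of m] by linarith
  moreover have "cmod (of_real (metallic_mean m)) = metallic_mean m"
    unfolding norm_of_real using metallic_mean_ge[of m] by linarith
  ultimately show ?thesis
    unfolding spectral_radius_def spectrum_mat2_metallic[OF assms] by (simp del: of_real_diff add: max_def)
qed

lemma sqrt_of_nat_in_Rats_imp_square:
  assumes "sqrt (real n) \<in> \<rat>"
  obtains k where "n = k\<^sup>2"
proof -
  obtain p q :: nat where q: "q \<noteq> 0" and pq: "\<bar>sqrt (real n)\<bar> = real p / real q" and "coprime p q"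
    using assms by (rule Rats_abs_nat_div_natE)
  then have "real p = sqrt (real n) * real q"
    by (simp add: field_simps)
  then have "real (p\<^sup>2) = real (n * q\<^sup>2)"
    by (simp add: power_mult_distrib)
  then have eq: "p\<^sup>2 = n * q\<^sup>2"
    by (simp only: of_nat_eq_iff)
  then have "q\<^sup>2 dvd p\<^sup>2"
    by simp
  then have "q dvd p"
    by simp
  with \<open>coprime p q\<close> have "q = 1"
    by (metis coprime_common_divisor_nat dvd_refl)
  with eq show thesis
    by (intro that[of p]) simp
qed

lemma metallic_mean_irrational:
  assumes "m \<ge> 1"
  shows "metallic_mean m \<notin> \<rat>"
proof
  assume "metallic_mean m \<in> \<rat>"
  moreover have "sqrt (real (m\<^sup>2 + 4)) = 2 * metallic_mean m - m"
    by (simp add: metallic_mean_def field_simps)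
  ultimately have "sqrt (real (m\<^sup>2 + 4)) \<in> \<rat>"
    by simp
  then obtain k where k: "m\<^sup>2 + 4 = k\<^sup>2"
    by (rule sqrt_of_nat_in_Rats_imp_square)
  then have "m < k"
    using power_less_imp_less_base[of m 2 k] by simp
  then consider "k = m + 1" | "m + 2 \<le> k"
    by linarith
  then show False
  proof cases
    case 1
    then have "m * m + 4 = m * m + 2 * m + 1"
      using k by (simp add: power2_eq_square algebra_simps)
    then show False
      by presburger
  next
    case 2
    then have "(m + 2) * (m + 2) \<le> k * k"
      using mult_le_mono by blast
    then show False
      using k assms by (simp add: power2_eq_square algebra_simps)
  qed
qed

section \<open>The quiver Q_m and its bricks\<close>

(* Arrows 0, ..., m - 1 are loops at vertex 0; arrow m goes from 0 to 1 and arrow m + 1 back. *)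
definition Qm :: "nat \<Rightarrow> quiver" where
  "Qm m = (2, replicate m (0, 0) @ [(0, 1), (1, 0)])"

lemma nverts_Qm [simp]: "nverts (Qm m) = 2"
  by (simp add: Qm_def nverts_def)

lemma narrs_Qm [simp]: "narrs (Qm m) = Suc (Suc m)"
  by (simp add: Qm_def narrs_def)

lemma src_tgt_Qm [simp]:
  "a < m \<Longrightarrow> src (Qm m) a = 0" "a < m \<Longrightarrow> tgt (Qm m) a = 0"
  "src (Qm m) m = 0" "tgt (Qm m) m = 1"
  "src (Qm m) (Suc m) = 1" "tgt (Qm m) (Suc m) = 0"
  by (simp_all add: Qm_def src_def tgt_def nth_append)

lemma arrow_Qm_cases:
  assumes "a < Suc (Suc m)"
  obtains "a < m" | "a = m" | "a = Suc m"
  using assms less_Suc_eq by blast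

lemma finite_quiver_Qm: "finite_quiver (Qm m)"
  unfolding finite_quiver_def by (auto elim: arrow_Qm_cases)

lemma is_rep_QmD:
  assumes "is_rep (Qm m) X"
  shows "\<And>a. a < m \<Longrightarrow> maps X a \<in> carrier_mat (dimv X 0) (dimv X 0)"
    and "maps X m \<in> carrier_mat (dimv X 1) (dimv X 0)"
    and "maps X (Suc m) \<in> carrier_mat (dimv X 0) (dimv X 1)"
    and "\<And>a b. a < m \<Longrightarrow> b < m \<Longrightarrow> maps X b * maps X a = 0\<^sub>m (dimv X 0) (dimv X 0)"
    and "\<And>a. a < m \<Longrightarrow> maps X m * maps X a = 0\<^sub>m (dimv X 1) (dimv X 0)"
    and "\<And>a. a < m \<Longrightarrow> maps X a * maps X (Suc m) = 0\<^sub>m (dimv X 0) (dimv X 1)"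
    and "maps X (Suc m) * maps X m = 0\<^sub>m (dimv X 0) (dimv X 0)"
    and "maps X m * maps X (Suc m) = 0\<^sub>m (dimv X 1) (dimv X 1)"
proof -
  have carrier: "\<And>a. a < Suc (Suc m) \<Longrightarrow>
      maps X a \<in> carrier_mat (dimv X (tgt (Qm m) a)) (dimv X (src (Qm m) a))"
    and rel: "\<And>a b. a < Suc (Suc m) \<Longrightarrow> b < Suc (Suc m) \<Longrightarrow> tgt (Qm m) a = src (Qm m) b \<Longrightarrow>
      maps X b * maps X a = 0\<^sub>m (dimv X (tgt (Qm m) b)) (dimv X (src (Qm m) a))"
    using assms unfolding is_rep_def by auto
  show "maps X a \<in> carrier_mat (dimv X 0) (dimv X 0)" if "a < m" for a
    using carrier[of a] that by simp
  show "maps X m \<in> carrier_mat (dimv X 1) (dimv X 0)"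
    using carrier[of m] by simp
  show "maps X (Suc m) \<in> carrier_mat (dimv X 0) (dimv X 1)"
    using carrier[of "Suc m"] by simp
  show "maps X b * maps X a = 0\<^sub>m (dimv X 0) (dimv X 0)" if "a < m" "b < m" for a b
    using rel[of a b] that by simp
  show "maps X m * maps X a = 0\<^sub>m (dimv X 1) (dimv X 0)" if "a < m" for a
    using rel[of a m] that by simp
  show "maps X a * maps X (Suc m) = 0\<^sub>m (dimv X 0) (dimv X 1)" if "a < m" for a
    using rel[of "Suc m" a] that by simp
  show "maps X (Suc m) * maps X m = 0\<^sub>m (dimv X 0) (dimv X 0)"
    using rel[of m "Suc m"] by simp
  show "maps X m * maps X (Suc m) = 0\<^sub>m (dimv X 1) (dimv X 1)"
    using rel[of "Suc m" m] by simp
qed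

definition vertex_mats :: "'k::field mat \<Rightarrow> 'k mat \<Rightarrow> nat \<Rightarrow> nat \<Rightarrow> nat \<Rightarrow> 'k" where
  "vertex_mats F0 F1 v i j =
     (if v = 0 \<and> i < dim_row F0 \<and> j < dim_col F0 then F0 $$ (i, j)
      else if v = 1 \<and> i < dim_row F1 \<and> j < dim_col F1 then F1 $$ (i, j) else 0)"

lemma tomat_vertex_mats:
  "F0 \<in> carrier_mat r c \<Longrightarrow> tomat r c (vertex_mats F0 F1 0) = F0"
  "F1 \<in> carrier_mat r c \<Longrightarrow> tomat r c (vertex_mats F0 F1 1) = F1"
  by (auto simp: tomat_def vertex_mats_def)

lemma vertex_mats_in_homs_Qm:
  assumes F0: "F0 \<in> carrier_mat (dimv Y 0) (dimv X 0)"
    and F1: "F1 \<in> carrier_mat (dimv Y 1) (dimv X 1)"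
    and "\<And>a. a < m \<Longrightarrow> maps Y a * F0 = F0 * maps X a"
    and "maps Y m * F0 = F1 * maps X m"
    and "maps Y (Suc m) * F1 = F0 * maps X (Suc m)"
  shows "vertex_mats F0 F1 \<in> homs (Qm m) X Y"
  unfolding homs_def
proof (intro CollectI conjI allI impI)
  fix v i j
  assume "\<not> (v < nverts (Qm m) \<and> i < dimv Y v \<and> j < dimv X v)"
  then show "vertex_mats F0 F1 v i j = 0"
    using F0 F1 by (auto simp: vertex_mats_def)
next
  have F1': "tomat (dimv Y (Suc 0)) (dimv X (Suc 0)) (vertex_mats F0 F1 (Suc 0)) = F1"
    using tomat_vertex_mats(2)[OF F1] by simp
  fix a
  assume "a < narrs (Qm m)"
  then have "a < Suc (Suc m)"
    by simp
  then show "maps Y a * tomat (dimv Y (src (Qm m) a)) (dimv X (src (Qm m) a)) (vertex_mats F0 F1 (src (Qm m) a)) =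
      tomat (dimv Y (tgt (Qm m) a)) (dimv X (tgt (Qm m) a)) (vertex_mats F0 F1 (tgt (Qm m) a)) * maps X a"
    by (cases rule: arrow_Qm_cases) (simp_all add: tomat_vertex_mats(1)[OF F0] F1' assms)
qed

lemma brick_Qm_endo_scalar:
  assumes "brick (Qm m) X"
    and F0: "F0 \<in> carrier_mat (dimv X 0) (dimv X 0)"
    and F1: "F1 \<in> carrier_mat (dimv X 1) (dimv X 1)"
    and "\<And>a. a < m \<Longrightarrow> maps X a * F0 = F0 * maps X a"
    and "maps X m * F0 = F1 * maps X m"
    and "maps X (Suc m) * F1 = F0 * maps X (Suc m)"
  obtains c where "F0 = c \<cdot>\<^sub>m 1\<^sub>m (dimv X 0)" "F1 = c \<cdot>\<^sub>m 1\<^sub>m (dimv X 1)"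
proof -
  obtain c where c: "\<And>v. v < 2 \<Longrightarrow>
      tomat (dimv X v) (dimv X v) (vertex_mats F0 F1 v) = c \<cdot>\<^sub>m 1\<^sub>m (dimv X v)"
    using brick_endo_scalar[OF assms(1) vertex_mats_in_homs_Qm[OF F0 F1 assms(4-6)]] by auto
  show thesis
  proof (rule that)
    show "F0 = c \<cdot>\<^sub>m 1\<^sub>m (dimv X 0)"
      using c[of 0] tomat_vertex_mats(1)[OF F0] by simp
    show "F1 = c \<cdot>\<^sub>m 1\<^sub>m (dimv X 1)"
      using c[of 1] tomat_vertex_mats(2)[OF F1] by simp
  qed
qed

(* As paths of length two act by zero, a loop acting alone at vertex 0 is an endomorphism;
   being scalar and nilpotent, it vanishes. *)
lemma brick_Qm_loop_zero:
  assumes b: "brick (Qm m) X" and a: "a < m"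
  shows "maps X a = 0\<^sub>m (dimv X 0) (dimv X 0)"
proof -
  note R = is_rep_QmD[OF brick_is_rep[OF b]]
  define L where "L = maps X a"
  have L: "L \<in> carrier_mat (dimv X 0) (dimv X 0)"
    using R(1)[OF a] by (simp add: L_def)
  obtain c where c: "L = c \<cdot>\<^sub>m 1\<^sub>m (dimv X 0)"
  proof (rule brick_Qm_endo_scalar[OF b L zero_carrier_mat])
    show "maps X b * L = L * maps X b" if "b < m" for b
      using R(4)[OF a that] R(4)[OF that a] by (simp add: L_def)
    show "maps X m * L = 0\<^sub>m (dimv X 1) (dimv X 1) * maps X m"
      using R(2) R(5)[OF a] by (simp add: L_def)
    show "maps X (Suc m) * 0\<^sub>m (dimv X 1) (dimv X 1) = L * maps X (Suc m)"
      using R(3) R(6)[OF a] by (simp add: L_def)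
  qed
  have "(L * L) $$ (0, 0) = c * c" if "0 < dimv X 0"
    unfolding c using that
    by (simp add: mult_smult_assoc_mat[of _ "dimv X 0" "dimv X 0"] mult_smult_distrib[of _ "dimv X 0" "dimv X 0"])
  then have "c * c = 0" if "0 < dimv X 0"
    using R(4)[OF a a] that by (simp add: L_def)
  then show ?thesis
    using L by (intro eq_matI) (auto simp: L_def[symmetric] c)
qed

(* For a nonzero entry G_ij of an arrow matrix G, the products of G with the matrix unit E_ji
   form an endomorphism. It is scalar but has a single nonzero diagonal entry, so both vertex
   spaces are lines. *)
lemma brick_Qm_forward_arrow_dims:
  assumes b: "brick (Qm m) X" and ij: "i < dimv X 1" "j < dimv X 0" "maps X m $$ (i, j) \<noteq> 0"
  shows "dimv X 0 = 1" "dimv X 1 = 1"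
proof -
  note R = is_rep_QmD[OF brick_is_rep[OF b]]
  define d0 d1 where "d0 = dimv X 0" and "d1 = dimv X 1"
  define G D where "G = maps X m" and "D = maps X (Suc m)"
  define H :: "'a mat" where "H = elem_mat d0 d1 j i"
  have G: "G \<in> carrier_mat d1 d0" and D: "D \<in> carrier_mat d0 d1" and H: "H \<in> carrier_mat d0 d1"
    using R(2,3) by (simp_all add: G_def D_def H_def d0_def d1_def)
  have DG: "D * G = 0\<^sub>m d0 d0" and GD: "G * D = 0\<^sub>m d1 d1"
    unfolding D_def G_def d0_def d1_def by (fact R(7), fact R(8))
  obtain c where "H * G = c \<cdot>\<^sub>m 1\<^sub>m d0" "G * H = c \<cdot>\<^sub>m 1\<^sub>m d1"
  proof (rule brick_Qm_endo_scalar[OF b, of "H * G" "G * H"])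
    show "H * G \<in> carrier_mat (dimv X 0) (dimv X 0)" "G * H \<in> carrier_mat (dimv X 1) (dimv X 1)"
      using G H by (auto simp: d0_def d1_def)
    show "maps X a * (H * G) = H * G * maps X a" if "a < m" for a
      using G H brick_Qm_loop_zero[OF b that] by (simp add: d0_def)
    show "maps X m * (H * G) = G * H * maps X m"
      using G H by (simp add: G_def[symmetric] assoc_mult_mat[of _ d1 d0 _ d1 _ d0])
    have "D * (G * H) = 0\<^sub>m d0 d1"
      using D G H DG by (simp add: assoc_mult_mat[of D d0 d1 G d0 H d1, symmetric])
    moreover have "H * G * D = 0\<^sub>m d0 d1"
      using D G H GD by (simp add: assoc_mult_mat[of H d0 d1 G d0 D d1])
    ultimately show "maps X (Suc m) * (G * H) = H * G * maps X (Suc m)"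
      by (simp add: D_def)
  qed (simp_all add: d0_def d1_def)
  then show "dimv X 0 = 1" "dimv X 1 = 1"
    using rank_one_scalar_products[OF G _ _ _, of i j c] ij by (simp_all add: H_def G_def d0_def d1_def)
qed

lemma brick_Qm_backward_arrow_dims:
  assumes b: "brick (Qm m) X" and ij: "i < dimv X 0" "j < dimv X 1" "maps X (Suc m) $$ (i, j) \<noteq> 0"
  shows "dimv X 0 = 1" "dimv X 1 = 1"
proof -
  note R = is_rep_QmD[OF brick_is_rep[OF b]]
  define d0 d1 where "d0 = dimv X 0" and "d1 = dimv X 1"
  define G D where "G = maps X m" and "D = maps X (Suc m)"
  define H :: "'a mat" where "H = elem_mat d1 d0 j i"
  have G: "G \<in> carrier_mat d1 d0" and D: "D \<in> carrier_mat d0 d1" and H: "H \<in> carrier_mat d1 d0"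
    using R(2,3) by (simp_all add: G_def D_def H_def d0_def d1_def)
  have DG: "D * G = 0\<^sub>m d0 d0" and GD: "G * D = 0\<^sub>m d1 d1"
    unfolding D_def G_def d0_def d1_def by (fact R(7), fact R(8))
  obtain c where "D * H = c \<cdot>\<^sub>m 1\<^sub>m d0" "H * D = c \<cdot>\<^sub>m 1\<^sub>m d1"
  proof (rule brick_Qm_endo_scalar[OF b, of "D * H" "H * D"])
    show "D * H \<in> carrier_mat (dimv X 0) (dimv X 0)" "H * D \<in> carrier_mat (dimv X 1) (dimv X 1)"
      using D H by (auto simp: d0_def d1_def)
    show "maps X a * (D * H) = D * H * maps X a" if "a < m" for a
      using D H brick_Qm_loop_zero[OF b that] by (simp add: d0_def)
    have "G * (D * H) = 0\<^sub>m d1 d0"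
      using D G H GD by (simp add: assoc_mult_mat[of G d1 d0 D d1 H d0, symmetric])
    moreover have "H * D * G = 0\<^sub>m d1 d0"
      using D G H DG by (simp add: assoc_mult_mat[of H d1 d0 D d1 G d0])
    ultimately show "maps X m * (D * H) = H * D * maps X m"
      by (simp add: G_def)
    show "maps X (Suc m) * (H * D) = D * H * maps X (Suc m)"
      using D H by (simp add: D_def[symmetric] assoc_mult_mat[of _ d0 d1 _ d0 _ d1])
  qed (simp_all add: d0_def d1_def)
  then show "dimv X 0 = 1" "dimv X 1 = 1"
    using rank_one_scalar_products[OF D _ _ _, of i j c] ij by (simp_all add: H_def D_def d0_def d1_def)
qed

lemma brick_Qm_zero_arrows_dims:
  assumes b: "brick (Qm m) X"
    and G: "maps X m = 0\<^sub>m (dimv X 1) (dimv X 0)" and D: "maps X (Suc m) = 0\<^sub>m (dimv X 0) (dimv X 1)"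
  shows "dimv X 0 = 1 \<and> dimv X 1 = 0 \<or> dimv X 0 = 0 \<and> dimv X 1 = 1"
proof -
  define d0 d1 where "d0 = dimv X 0" and "d1 = dimv X 1"
  have scalar: "\<exists>c. F0 = c \<cdot>\<^sub>m 1\<^sub>m d0 \<and> F1 = c \<cdot>\<^sub>m 1\<^sub>m d1"
    if F0: "F0 \<in> carrier_mat d0 d0" and F1: "F1 \<in> carrier_mat d1 d1" for F0 F1 :: "'a mat"
  proof -
    have "\<exists>c. F0 = c \<cdot>\<^sub>m 1\<^sub>m (dimv X 0) \<and> F1 = c \<cdot>\<^sub>m 1\<^sub>m (dimv X 1)"
      by (rule brick_Qm_endo_scalar[OF b, of F0 F1])
        (use F0 F1 brick_Qm_loop_zero[OF b] in \<open>auto simp: G D d0_def d1_def\<close>)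
    then show ?thesis
      by (simp add: d0_def d1_def)
  qed
  have "d0 > 0 \<or> d1 > 0"
    using b unfolding brick_def nonzero_rep_def d0_def d1_def by (auto simp: less_2_cases_iff)
  then show ?thesis
  proof
    assume "d0 > 0"
    then obtain c where c: "(elem_mat d0 d0 0 0 :: 'a mat) = c \<cdot>\<^sub>m 1\<^sub>m d0" "0\<^sub>m d1 d1 = c \<cdot>\<^sub>m 1\<^sub>m d1"
      using scalar[of "elem_mat d0 d0 0 0" "0\<^sub>m d1 d1"] by auto
    have "d0 = 1"
      by (rule scalar_mat_single_diag_entry[OF c(1) \<open>d0 > 0\<close>]) (use \<open>d0 > 0\<close> in simp_all)
    moreover have "c = 1"
      using arg_cong[OF c(1), of "\<lambda>A. A $$ (0, 0)"] \<open>d0 > 0\<close> by simp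
    then have "d1 = 0"
      using arg_cong[OF c(2), of "\<lambda>A. A $$ (0, 0)"] by (cases "d1 = 0") auto
    ultimately show ?thesis
      by (simp add: d0_def d1_def)
  next
    assume "d1 > 0"
    then obtain c where c: "0\<^sub>m d0 d0 = c \<cdot>\<^sub>m 1\<^sub>m d0" "(elem_mat d1 d1 0 0 :: 'a mat) = c \<cdot>\<^sub>m 1\<^sub>m d1"
      using scalar[of "0\<^sub>m d0 d0" "elem_mat d1 d1 0 0"] by auto
    have "d1 = 1"
      by (rule scalar_mat_single_diag_entry[OF c(2) \<open>d1 > 0\<close>]) (use \<open>d1 > 0\<close> in simp_all)
    moreover have "c = 1"
      using arg_cong[OF c(2), of "\<lambda>A. A $$ (0, 0)"] \<open>d1 > 0\<close> by simp
    then have "d0 = 0"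
      using arg_cong[OF c(1), of "\<lambda>A. A $$ (0, 0)"] by (cases "d0 = 0") auto
    ultimately show ?thesis
      by (simp add: d0_def d1_def)
  qed
qed

definition thin_rep :: "nat \<Rightarrow> 'k::field rep \<Rightarrow> nat \<Rightarrow> nat \<Rightarrow> 'k \<Rightarrow> 'k \<Rightarrow> bool" where
  "thin_rep m X d0 d1 g h \<longleftrightarrow> is_rep (Qm m) X \<and> dimv X 0 = d0 \<and> dimv X 1 = d1 \<and>
     (\<forall>a<m. maps X a = 0\<^sub>m d0 d0) \<and> maps X m = mat d1 d0 (\<lambda>_. g) \<and> maps X (Suc m) = mat d0 d1 (\<lambda>_. h)"

lemma mat_1_1_eq: "A \<in> carrier_mat 1 1 \<Longrightarrow> A = mat 1 1 (\<lambda>_. A $$ (0, 0))"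
  by (rule eq_matI) auto

lemma brick_Qm_cases:
  assumes b: "brick (Qm m) X"
  obtains "thin_rep m X 1 0 0 0" | "thin_rep m X 0 1 0 0"
    | g where "g \<noteq> 0" "thin_rep m X 1 1 g 0" | h where "h \<noteq> 0" "thin_rep m X 1 1 0 h"
proof -
  note rep = brick_is_rep[OF b]
  note R = is_rep_QmD[OF rep]
  note loops = brick_Qm_loop_zero[OF b]
  consider (forward) i j where "i < dimv X 1" "j < dimv X 0" "maps X m $$ (i, j) \<noteq> 0"
    | (backward) i j where "i < dimv X 0" "j < dimv X 1" "maps X (Suc m) $$ (i, j) \<noteq> 0"
    | (zero) "maps X m = 0\<^sub>m (dimv X 1) (dimv X 0)" "maps X (Suc m) = 0\<^sub>m (dimv X 0) (dimv X 1)"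
    using R(2,3) by (metis eq_matI carrier_matD index_zero_mat)
  then show thesis
  proof cases
    case forward
    note dims = brick_Qm_forward_arrow_dims[OF b forward]
    define g where "g = maps X m $$ (0, 0)"
    have G: "maps X m = mat 1 1 (\<lambda>_. g)"
      using mat_1_1_eq R(2) dims by (simp add: g_def)
    have "g \<noteq> 0"
      using forward dims by (simp add: g_def)
    moreover have "(maps X (Suc m) * maps X m) $$ (0, 0) = maps X (Suc m) $$ (0, 0) * g"
      using R(3) dims by (simp add: G scalar_prod_def)
    then have "maps X (Suc m) = mat 1 1 (\<lambda>_. 0)"
      using R(3,7) dims \<open>g \<noteq> 0\<close> mat_1_1_eq[of "maps X (Suc m)"] by simp
    ultimately show thesis
      using that(3) rep dims G loops by (simp add: thin_rep_def)
  next
    case backward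
    note dims = brick_Qm_backward_arrow_dims[OF b backward]
    define h where "h = maps X (Suc m) $$ (0, 0)"
    have D: "maps X (Suc m) = mat 1 1 (\<lambda>_. h)"
      using mat_1_1_eq R(3) dims by (simp add: h_def)
    have "h \<noteq> 0"
      using backward dims by (simp add: h_def)
    moreover have "(maps X m * maps X (Suc m)) $$ (0, 0) = maps X m $$ (0, 0) * h"
      using R(2) dims by (simp add: D scalar_prod_def)
    then have "maps X m = mat 1 1 (\<lambda>_. 0)"
      using R(2,8) dims \<open>h \<noteq> 0\<close> mat_1_1_eq[of "maps X m"] by simp
    ultimately show thesis
      using that(4) rep dims D loops by (simp add: thin_rep_def)
  next
    case zero
    have const_0: "mat d1 d0 (\<lambda>_. 0) = 0\<^sub>m d1 d0" for d0 d1
      by (rule eq_matI) auto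
    show thesis
      using brick_Qm_zero_arrows_dims[OF b zero] that(1,2) rep zero loops by (auto simp: thin_rep_def const_0)
  qed
qed

section \<open>Hom and Ext between bricks of Q_m\<close>

lemma mat_const_mult_mat_const:
  "mat p q (\<lambda>_. x) * mat q r (\<lambda>_. y) = mat p r (\<lambda>_. of_nat q * x * (y :: 'a::field))"
  by (rule eq_matI) (auto simp: scalar_prod_def)

lemma thin_rep_hom:
  assumes X: "thin_rep m X d0 d1 g h" and Y: "thin_rep m Y e0 e1 g' h'"
    and "e1 = 0 \<or> d0 = 0 \<or> of_nat e0 * g' * a = of_nat d1 * b * g"
    and "e0 = 0 \<or> d1 = 0 \<or> of_nat e1 * h' * b = of_nat d0 * a * h"
  shows "vertex_mats (mat e0 d0 (\<lambda>_. a)) (mat e1 d1 (\<lambda>_. b)) \<in> homs (Qm m) X Y"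
proof (rule vertex_mats_in_homs_Qm)
  have const_eq: "mat r c (\<lambda>_. x) = mat r c (\<lambda>_. y)" if "r = 0 \<or> c = 0 \<or> x = y" for r c and x y :: 'a
    using that by (auto intro: eq_matI)
  show "maps Y m * mat e0 d0 (\<lambda>_. a) = mat e1 d1 (\<lambda>_. b) * maps X m"
    using X Y assms(3) by (auto simp: thin_rep_def mat_const_mult_mat_const intro!: const_eq)
  show "maps Y (Suc m) * mat e1 d1 (\<lambda>_. b) = mat e0 d0 (\<lambda>_. a) * maps X (Suc m)"
    using X Y assms(4) by (auto simp: thin_rep_def mat_const_mult_mat_const intro!: const_eq)
  show "maps Y l * mat e0 d0 (\<lambda>_. a) = mat e0 d0 (\<lambda>_. a) * maps X l" if "l < m" for l
    using X Y that by (simp add: thin_rep_def)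
qed (use X Y in \<open>simp_all add: thin_rep_def\<close>)

lemma thin_rep_hom_dim_ne_0:
  assumes X: "thin_rep m X d0 d1 g h" and Y: "thin_rep m Y e0 e1 g' h'"
    and "e1 = 0 \<or> d0 = 0 \<or> of_nat e0 * g' * a = of_nat d1 * b * g"
    and "e0 = 0 \<or> d1 = 0 \<or> of_nat e1 * h' * b = of_nat d0 * a * h"
    and "0 < e0 \<and> 0 < d0 \<and> a \<noteq> 0 \<or> 0 < e1 \<and> 0 < d1 \<and> b \<noteq> 0"
  shows "hom_dim (Qm m) X Y \<noteq> 0"
proof (rule hom_dim_ne_0[OF thin_rep_hom[OF assms(1-4)]])
  show "vertex_mats (mat e0 d0 (\<lambda>_. a)) (mat e1 d1 (\<lambda>_. b)) \<noteq> 0"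
    using assms(5) by (auto simp: vertex_mats_def fun_eq_iff)
qed

(* The simple representation at vertex 0 (resp. 1) is a quotient of X and a subrepresentation
   of Y. *)
lemma hom_dim_thin_rep_via_vertex_0:
  "thin_rep m X 1 d1 g 0 \<Longrightarrow> thin_rep m Y 1 e1 0 h' \<Longrightarrow> hom_dim (Qm m) X Y \<noteq> 0"
  by (rule thin_rep_hom_dim_ne_0[of m X 1 d1 g 0 Y 1 e1 0 h' 1 0]) auto

lemma hom_dim_thin_rep_via_vertex_1:
  "thin_rep m X d0 1 0 h \<Longrightarrow> thin_rep m Y e0 1 g' 0 \<Longrightarrow> hom_dim (Qm m) X Y \<noteq> 0"
  by (rule thin_rep_hom_dim_ne_0[of m X d0 1 0 h Y e0 1 g' 0 0 1]) auto

lemma hom_dim_thin_rep_forward_ne_0: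
  "g \<noteq> 0 \<Longrightarrow> thin_rep m X 1 1 g 0 \<Longrightarrow> thin_rep m Y 1 1 g' 0 \<Longrightarrow> hom_dim (Qm m) X Y \<noteq> 0"
  by (rule thin_rep_hom_dim_ne_0[of m X 1 1 g 0 Y 1 1 g' 0 g g']) auto

lemma hom_dim_thin_rep_backward_ne_0:
  "h \<noteq> 0 \<Longrightarrow> thin_rep m X 1 1 0 h \<Longrightarrow> thin_rep m Y 1 1 0 h' \<Longrightarrow> hom_dim (Qm m) X Y \<noteq> 0"
  by (rule thin_rep_hom_dim_ne_0[of m X 1 1 0 h Y 1 1 0 h' h' h]) auto

lemma brick_Qm_hom_orthogonal:
  assumes bX: "brick (Qm m) X" and bY: "brick (Qm m) Y"
    and XY: "hom_dim (Qm m) X Y = 0" and YX: "hom_dim (Qm m) Y X = 0"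
  shows "thin_rep m X 1 0 0 0 \<and> thin_rep m Y 0 1 0 0 \<or> thin_rep m X 0 1 0 0 \<and> thin_rep m Y 1 0 0 0"
proof (cases rule: brick_Qm_cases[OF bX]; cases rule: brick_Qm_cases[OF bY])
qed (use XY YX in \<open>blast dest: hom_dim_thin_rep_via_vertex_0 hom_dim_thin_rep_via_vertex_1
  hom_dim_thin_rep_forward_ne_0 hom_dim_thin_rep_backward_ne_0\<close>)+

lemma zero_maps_thin_rep: "thin_rep m X d0 d1 0 0 \<Longrightarrow> zero_maps (Qm m) X"
  unfolding zero_maps_def thin_rep_def by (auto elim!: arrow_Qm_cases intro: eq_matI)

lemma ext1_dim_Qm_zero_maps:
  assumes "zero_maps (Qm m) X" "zero_maps (Qm m) Y"
  shows "ext1_dim (Qm m) X Y = m * dimv Y 0 * dimv X 0 + dimv Y 1 * dimv X 0 + dimv Y 0 * dimv X 1"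
proof -
  have "(\<Sum>a<m. dimv Y (tgt (Qm m) a) * dimv X (src (Qm m) a)) = m * dimv Y 0 * dimv X 0"
    by simp
  then show ?thesis
    by (simp add: ext1_dim_zero_maps[OF assms])
qed

lemma thin_rep_1_1_arrow:
  assumes "thin_rep m X 1 1 g h" "a < Suc (Suc m)"
  shows "dimv X (src (Qm m) a) = 1" "dimv X (tgt (Qm m) a) = 1"
    and "maps X a \<in> carrier_mat 1 1"
    and "maps X a $$ (0, 0) = (if a = m then g else if a = Suc m then h else 0)"
  using assms by (auto simp: thin_rep_def elim: arrow_Qm_cases)

lemma cocycle_thin_rep_1_1:
  assumes X: "thin_rep m X 1 1 g h" and d: "d \<in> cocycles (Qm m) X X"
    and ab: "a < Suc (Suc m)" "b < Suc (Suc m)" "tgt (Qm m) a = src (Qm m) b"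
  shows "maps X b $$ (0, 0) * d a 0 0 + d b 0 0 * maps X a $$ (0, 0) = 0"
proof -
  have "maps X b * tomat 1 1 (d a) + tomat 1 1 (d b) * maps X a = 0\<^sub>m 1 1"
    using d ab thin_rep_1_1_arrow(1,2)[OF X] unfolding cocycles_def by fastforce
  then show ?thesis
    using thin_rep_1_1_arrow(3)[OF X ab(1)] thin_rep_1_1_arrow(3)[OF X ab(2)]
    by (auto simp: scalar_prod_def dest!: arg_cong[of _ _ "\<lambda>A. A $$ (0, 0)"])
qed

(* The cocycle conditions involving the nonzero arrow kill all components except the one on
   that arrow. *)
lemma cocycles_thin_rep_1_1:
  assumes X: "thin_rep m X 1 1 g h" and gh: "g \<noteq> 0 \<and> h = 0 \<or> g = 0 \<and> h \<noteq> 0"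
  shows "cocycles (Qm m) X X \<subseteq> supported_on {(if g \<noteq> 0 then m else Suc m, 0, 0)}"
proof
  fix d
  assume d: "d \<in> cocycles (Qm m) X X"
  note rel = cocycle_thin_rep_1_1[OF X d] and scalar = thin_rep_1_1_arrow(4)[OF X]
  have on_support: "d a 0 0 = 0" if a: "a < Suc (Suc m)" "a \<noteq> (if g \<noteq> 0 then m else Suc m)" for a
    using gh
  proof
    assume gh: "g \<noteq> 0 \<and> h = 0"
    with a have "a < m \<or> a = Suc m"
      by (auto simp: less_Suc_eq)
    then show ?thesis
      using rel[of a m] rel[of m "Suc m"] scalar[of a] scalar[of m] scalar[of "Suc m"] gh by auto
  next
    assume gh: "g = 0 \<and> h \<noteq> 0"
    with a have "a < m \<or> a = m"
      by (auto simp: less_Suc_eq)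
    then show ?thesis
      using rel[of "Suc m" a] rel[of "Suc m" m] scalar[of a] scalar[of m] scalar[of "Suc m"] gh by auto
  qed
  have off_support: "d a i j = 0" if "\<not> (a < Suc (Suc m) \<and> i = 0 \<and> j = 0)" for a i j
  proof -
    have "\<not> (a < narrs (Qm m) \<and> i < dimv X (tgt (Qm m) a) \<and> j < dimv X (src (Qm m) a))"
      using that thin_rep_1_1_arrow(1,2)[OF X, of a] by auto
    then show ?thesis
      using d unfolding cocycles_def by blast
  qed
  show "d \<in> supported_on {(if g \<noteq> 0 then m else Suc m, 0, 0)}"
    unfolding supported_on_def
  proof (intro CollectI allI impI)
    fix a i j :: nat
    assume "(a, i, j) \<notin> {(if g \<noteq> 0 then m else Suc m, 0, 0)}"
    then show "d a i j = 0"
      using on_support[of a] off_support[of a i j] by (cases "a < Suc (Suc m) \<and> i = 0 \<and> j = 0") auto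
  qed
qed

lemma ext1_dim_thin_rep_1_1_le_1:
  assumes "thin_rep m X 1 1 g h" "g \<noteq> 0 \<and> h = 0 \<or> g = 0 \<and> h \<noteq> 0"
  shows "ext1_dim (Qm m) X X \<le> 1"
proof -
  have "kdim (cocycles (Qm m) X X) \<le> 1"
    using kdim_le_card[OF _ cocycles_thin_rep_1_1[OF assms]] by simp
  then show ?thesis
    by (simp add: ext1_dim_def)
qed

lemma thin_rep_simple_rep:
  "thin_rep m (simple_rep (Qm m) 0) 1 0 0 0" "thin_rep m (simple_rep (Qm m) 1) 0 1 0 0"
  by (simp_all add: thin_rep_def is_rep_simple_rep) (auto simp: simple_rep_def intro!: eq_matI)

lemma ext1_dim_brick_Qm_le:
  assumes "brick (Qm m) X"
  shows "real (ext1_dim (Qm m) X X) \<le> metallic_mean m"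
  using assms
proof (cases rule: brick_Qm_cases)
  case 1
  then have "ext1_dim (Qm m) X X = m"
    by (simp add: ext1_dim_Qm_zero_maps zero_maps_thin_rep) (simp add: thin_rep_def)
  then show ?thesis
    using metallic_mean_ge(1)[of m] by simp
next
  case 2
  then have "ext1_dim (Qm m) X X = 0"
    by (simp add: ext1_dim_Qm_zero_maps zero_maps_thin_rep) (simp add: thin_rep_def)
  then show ?thesis
    using metallic_mean_ge(2)[of m] by simp
next
  case 3
  then have "ext1_dim (Qm m) X X \<le> 1"
    by (intro ext1_dim_thin_rep_1_1_le_1) auto
  then show ?thesis
    using metallic_mean_ge(2)[of m] by simp
next
  case 4
  then have "ext1_dim (Qm m) X X \<le> 1"
    by (intro ext1_dim_thin_rep_1_1_le_1) auto
  then show ?thesis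
    using metallic_mean_ge(2)[of m] by simp
qed

section \<open>The Frobenius-Perron dimension of Q_m\<close>

lemma adj_mat_Qm_simples:
  assumes X: "thin_rep m X 1 0 0 0" and Y: "thin_rep m Y 0 1 0 0"
  shows "adj_mat (Qm m) [X, Y] = mat2 (of_nat m) 0" "adj_mat (Qm m) [Y, X] = mat2 0 (of_nat m)"
proof -
  have "ext1_dim (Qm m) X X = m" "ext1_dim (Qm m) X Y = 1" "ext1_dim (Qm m) Y X = 1" "ext1_dim (Qm m) Y Y = 0"
    using X Y by (simp_all add: ext1_dim_Qm_zero_maps zero_maps_thin_rep) (simp_all add: thin_rep_def)
  then show "adj_mat (Qm m) [X, Y] = mat2 (of_nat m) 0" "adj_mat (Qm m) [Y, X] = mat2 0 (of_nat m)"
    by (auto simp: adj_mat_def mat2_def less_2_cases_iff intro!: eq_matI)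
qed

lemma brick_set_Qm_cases:
  assumes "brick_set (Qm m) Xs"
  obtains X where "Xs = [X]" "brick (Qm m) X"
    | X Y where "Xs = [X, Y]" "thin_rep m X 1 0 0 0" "thin_rep m Y 0 1 0 0"
    | X Y where "Xs = [X, Y]" "thin_rep m X 0 1 0 0" "thin_rep m Y 1 0 0 0"
proof -
  have bricks: "brick (Qm m) (Xs ! i)" if "i < length Xs" for i
    using assms that unfolding brick_set_def by auto
  have orth: "thin_rep m (Xs ! i) 1 0 0 0 \<and> thin_rep m (Xs ! j) 0 1 0 0 \<or>
      thin_rep m (Xs ! i) 0 1 0 0 \<and> thin_rep m (Xs ! j) 1 0 0 0"
    if "i < length Xs" "j < length Xs" "i \<noteq> j" for i j
    by (rule brick_Qm_hom_orthogonal[OF bricks[OF that(1)] bricks[OF that(2)]])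
      (use assms that in \<open>auto simp: brick_set_def\<close>)
  have distinct_types: "\<not> (thin_rep m X 1 0 0 0 \<and> thin_rep m X 0 1 0 0)" for X :: "'a rep"
    by (simp add: thin_rep_def)
  have "Xs \<noteq> []"
    using assms by (simp add: brick_set_def)
  then have "length Xs \<ge> 1"
    by (simp add: Suc_le_eq)
  then consider "length Xs = 1" | "length Xs = 2" | "length Xs \<ge> 3"
    by linarith
  then show thesis
  proof cases
    case 1
    then obtain X where "Xs = [X]"
      by (auto simp: length_Suc_conv)
    then show thesis
      using that(1) bricks[of 0] by simp
  next
    case 2
    then obtain X Y where "Xs = [X, Y]"
      by (auto simp: length_Suc_conv numeral_2_eq_2)
    then show thesis
      using that(2,3) orth[of 0 1] by auto
  next
    case 3
    then show thesis
      using orth[of 0 1] orth[of 0 2] orth[of 1 2] distinct_types[of "Xs ! 0"] distinct_types[of "Xs ! 1"]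
        distinct_types[of "Xs ! 2"] \<open>Xs \<noteq> []\<close>
      by auto
  qed
qed

lemma spectral_radius_brick_set_Qm_le:
  assumes "brick_set (Qm m) Xs"
  shows "spectral_radius (adj_mat (Qm m) Xs) \<le> metallic_mean m"
  using assms
proof (cases rule: brick_set_Qm_cases)
  case (1 X)
  have adj: "adj_mat (Qm m) [X] = mat 1 1 (\<lambda>_. of_nat (ext1_dim (Qm m) X X))"
    by (auto simp: adj_mat_def intro!: eq_matI)
  show ?thesis
    unfolding 1(1) adj spectral_radius_mat_1_1 using ext1_dim_brick_Qm_le[OF 1(2)] by simp
next
  case (2 X Y)
  then show ?thesis
    by (simp add: adj_mat_Qm_simples spectral_radius_mat2_metallic)
next
  case (3 X Y)
  then show ?thesis
    by (simp add: adj_mat_Qm_simples spectral_radius_mat2_metallic)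
qed

lemma brick_set_Qm_simples: "brick_set (Qm m) [simple_rep (Qm m) 0, simple_rep (Qm m) 1 :: 'k::field rep]"
proof -
  let ?Xs = "[simple_rep (Qm m) 0, simple_rep (Qm m) 1 :: 'k rep]"
  have "hom_dim (Qm m) (?Xs ! i) (?Xs ! j) = 0" if "i < 2" "j < 2" "i \<noteq> j" for i j
    using that by (auto simp: less_2_cases_iff hom_dim_simple_rep_distinct)
  moreover have "brick (Qm m) X" if "X \<in> set ?Xs" for X
    using that brick_simple_rep[of 0 "Qm m"] brick_simple_rep[of 1 "Qm m"] by auto
  ultimately show ?thesis
    unfolding brick_set_def by auto
qed

theorem fpd_Qm: "fpd TYPE('k::field) (Qm m) = ereal (metallic_mean m)"
proof (rule antisym)
  show "fpd TYPE('k) (Qm m) \<le> ereal (metallic_mean m)"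
    unfolding fpd_def by (rule SUP_least) (simp add: spectral_radius_brick_set_Qm_le)
  have "ereal (metallic_mean m) =
      ereal (spectral_radius (adj_mat (Qm m) [simple_rep (Qm m) 0, simple_rep (Qm m) 1 :: 'k rep]))"
    unfolding adj_mat_Qm_simples(1)[OF thin_rep_simple_rep] by (simp add: spectral_radius_mat2_metallic)
  also have "\<dots> \<le> fpd TYPE('k) (Qm m)"
    unfolding fpd_def by (rule SUP_upper) (use brick_set_Qm_simples in blast)
  finally show "ereal (metallic_mean m) \<le> fpd TYPE('k) (Qm m)" .
qed

theorem proposition1p4:
  fixes r :: real
  assumes "alg_closed TYPE('k::field)"
    and "r \<ge> 0"
  shows "\<exists>Q. finite_quiver Q \<and>
           (\<exists>x. fpd TYPE('k) Q = ereal x \<and> x \<notin> \<rat> \<and> x > r)"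
proof -
  define m where "m = nat \<lceil>r\<rceil> + 1"
  have "m \<ge> 1" and "r < real m"
    unfolding m_def by linarith+
  then have "r < metallic_mean m"
    using metallic_mean_ge(1)[of m] by linarith
  then show ?thesis
    using finite_quiver_Qm[of m] fpd_Qm[of m] metallic_mean_irrational[OF \<open>m \<ge> 1\<close>] by blast
qed

end
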